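(* For every infinite computable set $R\subseteq\mathbb N$, the sequence $\Omega_R$ is captured by a $\mathbf c_{\Omega,R}$-bounded test.
   Context: $\Omega$ is a fixed left-c.e. ML-random real, viewed also as an infinite binary sequence, with a computable increasing sequence of rationals $\Omega_s\to\Omega$ (here $\Omega_s$ for a number $s$ denotes the approximation). For an infinite set $R$, $\Omega_R$ is the sequence obtained from $\Omega$ by deleting the bits at positions outside $R$ (its $m$-th bit is $\Omega(p_R(m))$, $p_R(m)$ the $m$-th element of $R$). Let $k_s(n)=\lfloor-\log_2(\Omega_s-\Omega_n)\rfloor$ and $k(n)=\lfloor-\log_2(\Omega-\Omega_n)\rfloor$. Define $\mathbf c_{\Omega,R}(n,s)=2^{-|R\cap k_s(n)|}$ (where $R\cap m=R\cap\{0,\dots,m-1\}$), a monotonic cost function with limit $\underline{\mathbf c}_{\Omega,R}(n)=2^{-|R\cap k(n)|}$. A $\mathbf c$-bounded test is a nested sequence of uniformly c.e. open sets $V_n\subseteq 2^\omega$ with $\mu(V_n)\le C\,\underline{\mathbf c}(n)$ for some constant $C$; it captures the elements of $\bigcap_nV_n$. *)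

theory Defs
  imports "HOL-Probability.Probability" "HOL-Library.Nat_Bijection"
begin

datatype recf = Zero | Succ | Proj nat | Comp recf "recf list" | Prec recf recf | Mn recf

inductive eval_recf :: "recf \<Rightarrow> nat list \<Rightarrow> nat \<Rightarrow> bool" where
  ev_zero: "eval_recf Zero xs 0"
| ev_succ: "eval_recf Succ (x # xs) (Suc x)"
| ev_proj: "i < length xs \<Longrightarrow> eval_recf (Proj i) xs (xs ! i)"
| ev_comp: "length ys = length gs \<Longrightarrow> (\<forall>i<length gs. eval_recf (gs ! i) xs (ys ! i))
            \<Longrightarrow> eval_recf f ys z \<Longrightarrow> eval_recf (Comp f gs) xs z"
| ev_prec0: "eval_recf f xs z \<Longrightarrow> eval_recf (Prec f g) (0 # xs) z"
| ev_precS: "eval_recf (Prec f g) (n # xs) y \<Longrightarrow> eval_recf g (y # n # xs) z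
            \<Longrightarrow> eval_recf (Prec f g) (Suc n # xs) z"
| ev_mn: "eval_recf f (n # xs) 0 \<Longrightarrow> (\<forall>m<n. \<exists>y. eval_recf f (m # xs) y \<and> y \<noteq> 0)
            \<Longrightarrow> eval_recf (Mn f) xs n"

definition computable_fun :: "(nat \<Rightarrow> nat) \<Rightarrow> bool" where
  "computable_fun f \<longleftrightarrow> (\<exists>p. \<forall>n. eval_recf p [n] (f n))"

definition computable_set :: "nat set \<Rightarrow> bool" where
  "computable_set R \<longleftrightarrow> computable_fun (\<lambda>n. if n \<in> R then 1 else 0)"

definition ce_set :: "nat set \<Rightarrow> bool" where
  "ce_set A \<longleftrightarrow> (\<exists>p. \<forall>x. x \<in> A \<longleftrightarrow> (\<exists>y. eval_recf p [x] y))"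

definition computable_rat_seq :: "(nat \<Rightarrow> real) \<Rightarrow> bool" where
  "computable_rat_seq q \<longleftrightarrow> (\<exists>a d. computable_fun a \<and> computable_fun d \<and>
      (\<forall>s. q s = real_of_int (int_decode (a s)) / real (Suc (d s))))"

definition code_str :: "bool list \<Rightarrow> nat" where
  "code_str \<sigma> = list_encode (map (\<lambda>b. if b then 1 else 0) \<sigma>)"

definition cylinder :: "bool list \<Rightarrow> (nat \<Rightarrow> bool) set" where
  "cylinder \<sigma> = {X. \<forall>i<length \<sigma>. X i = \<sigma> ! i}"

definition cantor_measure :: "(nat \<Rightarrow> bool) measure" where
  "cantor_measure = PiM UNIV (\<lambda>_::nat. measure_pmf (bernoulli_pmf (1/2)))"

definition unif_ce_open :: "(nat \<Rightarrow> (nat \<Rightarrow> bool) set) \<Rightarrow> bool" where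
  "unif_ce_open V \<longleftrightarrow> (\<exists>W. ce_set W \<and>
      (\<forall>n. V n = \<Union> {cylinder \<sigma> | \<sigma>. prod_encode (n, code_str \<sigma>) \<in> W}))"

definition ml_random :: "(nat \<Rightarrow> bool) \<Rightarrow> bool" where
  "ml_random X \<longleftrightarrow> \<not> (\<exists>U. unif_ce_open U \<and>
      (\<forall>n. emeasure cantor_measure (U n) \<le> ennreal ((1/2) ^ n)) \<and> X \<in> (\<Inter>n. U n))"

text \<open>Binary expansion of a real in (0,1): bit i is the (i+1)-th digit after the point.\<close>
definition real_bits :: "real \<Rightarrow> nat \<Rightarrow> bool" where
  "real_bits x i = odd \<lfloor>x * 2 ^ Suc i\<rfloor>"

text \<open>Omega_R: delete the bits outside R; the m-th bit is X (p_R m).\<close>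
definition restrict_seq :: "nat set \<Rightarrow> (nat \<Rightarrow> bool) \<Rightarrow> nat \<Rightarrow> bool" where
  "restrict_seq R X m = X (Infinite_Set.enumerate R m)"

definition k_stage :: "(nat \<Rightarrow> real) \<Rightarrow> nat \<Rightarrow> nat \<Rightarrow> nat" where
  "k_stage Om n s = nat \<lfloor>- log 2 (Om s - Om n)\<rfloor>"

definition k_lim :: "real \<Rightarrow> (nat \<Rightarrow> real) \<Rightarrow> nat \<Rightarrow> nat" where
  "k_lim \<Omega> Om n = nat \<lfloor>- log 2 (\<Omega> - Om n)\<rfloor>"

definition cost_OR :: "(nat \<Rightarrow> real) \<Rightarrow> nat set \<Rightarrow> nat \<Rightarrow> nat \<Rightarrow> real" where
  "cost_OR Om R n s = (1/2) ^ card (R \<inter> {..<k_stage Om n s})"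

definition cost_lim :: "real \<Rightarrow> (nat \<Rightarrow> real) \<Rightarrow> nat set \<Rightarrow> nat \<Rightarrow> real" where
  "cost_lim \<Omega> Om R n = (1/2) ^ card (R \<inter> {..<k_lim \<Omega> Om n})"

definition bounded_test :: "(nat \<Rightarrow> real) \<Rightarrow> (nat \<Rightarrow> (nat \<Rightarrow> bool) set) \<Rightarrow> bool" where
  "bounded_test c V \<longleftrightarrow> unif_ce_open V \<and> decseq V \<and>
      (\<exists>C. \<forall>n. emeasure cantor_measure (V n) \<le> ennreal (C * c n))"

definition captured_by :: "(nat \<Rightarrow> bool) \<Rightarrow> (nat \<Rightarrow> (nat \<Rightarrow> bool) set) \<Rightarrow> bool" where
  "captured_by X V \<longleftrightarrow> X \<in> (\<Inter>n. V n)"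

end

theory Submission
  imports Defs
begin

text \<open>For each \<open>n\<close>, \<open>V n\<close> collects, over all stages \<open>s\<close> with \<open>Om n < Om s\<close>, the cylinders
  fixing the \<open>R\<close>-bits below \<open>k = k_s(n)\<close> of the two dyadic rationals \<open>Om s\<close> and
  \<open>Om s + 2^-k\<close>. Once \<open>\<Omega> - Om s < 2^-k\<close>, one of them agrees with \<open>\<Omega>\<close> on all bits below
  \<open>k\<close>, so \<open>\<Omega>_R\<close> lies in \<open>V n\<close>; since \<open>k_s(n)\<close> grows with \<open>n\<close>, the same rounding shows
  that the \<open>V n\<close> are nested. A cylinder of \<open>V n\<close> with \<open>r\<close> restricted bits is determined by
  the first \<open>p_R(r - 1) + 1 \<le> k\<close> bits of a real in \<open>(Om n, Om n + 2^(1-k)]\<close>, so for each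
  \<open>r \<ge> |R \<inter> k(n)|\<close> only three cylinders occur, and \<open>\<mu>(V n) \<le> \<Sum>_r 3 * 2^-r = 6 c(n)\<close>.
  The index set of \<open>V\<close> is c.e. because it is given by a bounded arithmetic formula in the
  oracles for the approximations and for \<open>R\<close>, which is compiled to a partial recursive
  function. If \<open>Om N = \<Omega>\<close> for some \<open>N\<close>, the cost function is eventually constant and the
  whole space is a test.\<close>

section \<open>Primitive recursive expressions with oracles\<close>

lemma eval_recf_deterministic: "eval_recf p xs y \<Longrightarrow> eval_recf p xs z \<Longrightarrow> y = z"
proof (induction arbitrary: z rule: eval_recf.induct)
  case ev_zero from ev_zero.prems show ?case by (cases rule: eval_recf.cases) auto
next
  case ev_succ from ev_succ.prems show ?case by (cases rule: eval_recf.cases) auto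
next
  case ev_proj from ev_proj.prems show ?case by (cases rule: eval_recf.cases) auto
next
  case (ev_prec0 f xs z0 g)
  from ev_prec0.prems show ?case by (cases rule: eval_recf.cases) (auto simp: ev_prec0.IH)
next
  case (ev_precS f g n xs y z0)
  from ev_precS.prems show ?case by (cases rule: eval_recf.cases) (auto dest: ev_precS.IH)
next
  case (ev_comp ys gs xs f y)
  from ev_comp.prems show ?case
  proof (cases rule: eval_recf.cases)
    case (ev_comp ys')
    have "ys = ys'"
      using ev_comp ev_comp.IH \<open>length ys = length gs\<close> by (metis nth_equalityI)
    then show ?thesis using ev_comp ev_comp.IH by auto
  qed
next
  case (ev_mn f n xs)
  from ev_mn.prems show ?case
  proof (cases rule: eval_recf.cases)
    case ev_mn
    show ?thesis
    proof (rule ccontr)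
      assume "n \<noteq> z"
      then consider "n < z" | "z < n" by linarith
      then show False
      proof cases
        case 1
        with ev_mn obtain y where "eval_recf f (n # xs) y" "y \<noteq> 0" by blast
        with ev_mn.IH(1) show False by auto
      next
        case 2
        with ev_mn.IH(2) obtain y where "eval_recf f (z # xs) y" "y \<noteq> 0"
          "\<forall>w. eval_recf f (z # xs) w \<longrightarrow> y = w" by blast
        with ev_mn show False by auto
      qed
    qed
  qed
qed

datatype prexp = EZero | ESuc prexp | EVar nat | ECall nat prexp | ERec prexp prexp prexp

definition env_cons :: "nat \<Rightarrow> (nat \<Rightarrow> nat) \<Rightarrow> nat \<Rightarrow> nat" (infixr "\<triangleright>" 65) where
  "env_cons a e = (\<lambda>i. case i of 0 \<Rightarrow> a | Suc j \<Rightarrow> e j)"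

lemma env_cons_0 [simp]: "(a \<triangleright> e) 0 = a"
  and env_cons_Suc [simp]: "(a \<triangleright> e) (Suc j) = e j"
  and env_cons_1 [simp]: "(a \<triangleright> e) 1 = e 0"
  and env_cons_numeral [simp]: "(a \<triangleright> e) (numeral k) = e (pred_numeral k)"
  by (simp_all add: env_cons_def numeral_eq_Suc)

lemma nth_Cons_eq_env_cons: "(\<lambda>i. (a # xs) ! i) = a \<triangleright> (\<lambda>i. xs ! i)"
  by (rule ext) (auto simp: env_cons_def split: nat.splits)

text \<open>In \<open>ERec b s m\<close> the step expression \<open>s\<close> is evaluated in the environment
  \<open>r \<triangleright> k \<triangleright> e\<close>: variable 0 is the accumulator, variable 1 the counter, and the variables of
  the outer environment are shifted by two.\<close>

fun peval :: "(nat \<Rightarrow> nat \<Rightarrow> nat) \<Rightarrow> prexp \<Rightarrow> (nat \<Rightarrow> nat) \<Rightarrow> nat" where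
  "peval fs EZero e = 0"
| "peval fs (ESuc a) e = Suc (peval fs a e)"
| "peval fs (EVar i) e = e i"
| "peval fs (ECall j a) e = fs j (peval fs a e)"
| "peval fs (ERec b s m) e = rec_nat (peval fs b e) (\<lambda>k r. peval fs s (r \<triangleright> k \<triangleright> e)) (peval fs m e)"

fun wf_prexp :: "nat \<Rightarrow> prexp \<Rightarrow> bool" where
  "wf_prexp n EZero = True"
| "wf_prexp n (ESuc a) = wf_prexp n a"
| "wf_prexp n (EVar i) = (i < n)"
| "wf_prexp n (ECall j a) = wf_prexp n a"
| "wf_prexp n (ERec b s m) = (wf_prexp n b \<and> wf_prexp (Suc (Suc n)) s \<and> wf_prexp n m)"

text \<open>\<open>P j\<close> is a program for the oracle \<open>fs j\<close>; \<open>n\<close> is the number of arguments.\<close>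

fun compile :: "(nat \<Rightarrow> recf) \<Rightarrow> nat \<Rightarrow> prexp \<Rightarrow> recf" where
  "compile P n EZero = Zero"
| "compile P n (ESuc a) = Comp Succ [compile P n a]"
| "compile P n (EVar i) = Proj i"
| "compile P n (ECall j a) = Comp (P j) [compile P n a]"
| "compile P n (ERec b s m) =
     Comp (Prec (compile P n b) (compile P (Suc (Suc n)) s)) (compile P n m # map Proj [0..<n])"

lemma eval_recf_Prec_rec_nat:
  assumes "eval_recf pf xs b" and "\<And>k r. eval_recf pg (r # k # xs) (st k r)"
  shows "eval_recf (Prec pf pg) (m # xs) (rec_nat b st m)"
  by (induction m) (use assms in \<open>auto intro: ev_prec0 ev_precS\<close>)

lemma eval_recf_compile:
  assumes P: "\<And>j x. eval_recf (P j) [x] (fs j x)"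
  shows "wf_prexp n e \<Longrightarrow> length xs = n \<Longrightarrow> eval_recf (compile P n e) xs (peval fs e (\<lambda>i. xs ! i))"
proof (induction e arbitrary: n xs)
  case EZero then show ?case by (auto intro: ev_zero)
next
  case (ESuc a)
  have "eval_recf Succ [peval fs a (\<lambda>i. xs ! i)] (Suc (peval fs a (\<lambda>i. xs ! i)))"
    by (rule ev_succ)
  with ESuc show ?case by (auto intro!: ev_comp[where ys="[peval fs a (\<lambda>i. xs ! i)]"])
next
  case (EVar i) then show ?case by (auto intro: ev_proj)
next
  case (ECall j a)
  then show ?case using P by (auto intro!: ev_comp[where ys="[peval fs a (\<lambda>i. xs ! i)]"])
next
  case (ERec b s m)
  let ?m = "peval fs m (\<lambda>i. xs ! i)"
  have "eval_recf (Prec (compile P n b) (compile P (Suc (Suc n)) s)) (?m # xs)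
     (rec_nat (peval fs b (\<lambda>i. xs ! i)) (\<lambda>k r. peval fs s (r \<triangleright> k \<triangleright> (\<lambda>i. xs ! i))) ?m)"
  proof (rule eval_recf_Prec_rec_nat)
    show "eval_recf (compile P n b) xs (peval fs b (\<lambda>i. xs ! i))" using ERec by auto
    fix k r
    have "eval_recf (compile P (Suc (Suc n)) s) (r # k # xs) (peval fs s (\<lambda>i. (r # k # xs) ! i))"
      using ERec by auto
    then show "eval_recf (compile P (Suc (Suc n)) s) (r # k # xs) (peval fs s (r \<triangleright> k \<triangleright> (\<lambda>i. xs ! i)))"
      by (simp add: nth_Cons_eq_env_cons)
  qed
  moreover have "eval_recf (compile P n m) xs ?m" using ERec by auto
  ultimately show ?case
    using ERec.prems(2) by simp (rule ev_comp[where ys="?m # xs"], auto simp: nth_Cons' intro: ev_proj)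
qed

lemma peval_cong:
  "wf_prexp n e \<Longrightarrow> (\<And>i. i < n \<Longrightarrow> e1 i = e2 i) \<Longrightarrow> peval fs e e1 = peval fs e e2"
proof (induction e arbitrary: n e1 e2)
  case (ERec b s m)
  have "peval fs s (r \<triangleright> k \<triangleright> e1) = peval fs s (r \<triangleright> k \<triangleright> e2)" for k r
    using ERec.IH(2)[of "Suc (Suc n)" "r \<triangleright> k \<triangleright> e1" "r \<triangleright> k \<triangleright> e2"] ERec.prems
    by (auto simp: env_cons_def split: nat.splits)
  moreover have "peval fs b e1 = peval fs b e2" "peval fs m e1 = peval fs m e2"
    using ERec.IH(1)[of n e1 e2] ERec.IH(3)[of n e1 e2] ERec.prems by simp_all
  ultimately show ?case by simp
next
  case (ESuc a) then show ?case by (metis peval.simps(2) wf_prexp.simps(2))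
next
  case (ECall j a) then show ?case by (metis peval.simps(4) wf_prexp.simps(4))
qed simp_all

lemma ce_set_exists_zero:
  assumes "\<And>j. computable_fun (fs j)" and wf: "wf_prexp 2 e"
  shows "ce_set {x. \<exists>y. peval fs e (y \<triangleright> x \<triangleright> (\<lambda>_. 0)) = 0}"
proof -
  obtain P where P: "\<And>j x. eval_recf (P j) [x] (fs j x)"
    using assms(1) unfolding computable_fun_def by metis
  have eval: "eval_recf (compile P 2 e) [y, x] (peval fs e (y \<triangleright> x \<triangleright> (\<lambda>_. 0)))" for y x
  proof -
    have "peval fs e (\<lambda>i. [y, x] ! i) = peval fs e (y \<triangleright> x \<triangleright> (\<lambda>_. 0))"
      by (rule peval_cong[OF wf]) (auto simp: env_cons_def less_2_cases_iff split: nat.splits)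
    then show ?thesis using eval_recf_compile[where P=P and fs=fs, OF P wf, of "[y, x]"] by simp
  qed
  show ?thesis unfolding ce_set_def
  proof (intro exI[of _ "Mn (compile P 2 e)"] allI iffI)
    fix x assume "x \<in> {x. \<exists>y. peval fs e (y \<triangleright> x \<triangleright> (\<lambda>_. 0)) = 0}"
    then obtain y where y: "peval fs e (y \<triangleright> x \<triangleright> (\<lambda>_. 0)) = 0" by auto
    define y0 where "y0 = (LEAST y. peval fs e (y \<triangleright> x \<triangleright> (\<lambda>_. 0)) = 0)"
    have "peval fs e (y0 \<triangleright> x \<triangleright> (\<lambda>_. 0)) = 0" unfolding y0_def by (rule LeastI[of _ y]) (rule y)
    moreover have "\<forall>m<y0. peval fs e (m \<triangleright> x \<triangleright> (\<lambda>_. 0)) \<noteq> 0"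
      unfolding y0_def using not_less_Least by blast
    ultimately have "eval_recf (Mn (compile P 2 e)) [x] y0"
      using eval by (intro ev_mn) (metis, metis)
    then show "\<exists>y. eval_recf (Mn (compile P 2 e)) [x] y" by blast
  next
    fix x assume "\<exists>y. eval_recf (Mn (compile P 2 e)) [x] y"
    then obtain y where "eval_recf (Mn (compile P 2 e)) [x] y" by blast
    then have "eval_recf (compile P 2 e) [y, x] 0" by (cases rule: eval_recf.cases) auto
    with eval eval_recf_deterministic have "peval fs e (y \<triangleright> x \<triangleright> (\<lambda>_. 0)) = 0" by metis
    then show "x \<in> {x. \<exists>y. peval fs e (y \<triangleright> x \<triangleright> (\<lambda>_. 0)) = 0}" by blast
  qed
qed

definition lift2 :: "(nat \<Rightarrow> nat) \<Rightarrow> nat \<Rightarrow> nat" where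
  "lift2 f i = (if i < 2 then i else f (i - 2) + 2)"

fun rename :: "(nat \<Rightarrow> nat) \<Rightarrow> prexp \<Rightarrow> prexp" where
  "rename f EZero = EZero"
| "rename f (ESuc a) = ESuc (rename f a)"
| "rename f (EVar i) = EVar (f i)"
| "rename f (ECall j a) = ECall j (rename f a)"
| "rename f (ERec b s m) = ERec (rename f b) (rename (lift2 f) s) (rename f m)"

lemma peval_rename: "peval fs (rename f a) e = peval fs a (e \<circ> f)"
proof (induction a arbitrary: f e)
  case (ERec b s m)
  have "(\<lambda>i. (r \<triangleright> k \<triangleright> e) (lift2 f i)) = r \<triangleright> k \<triangleright> (\<lambda>i. e (f i))" for r k
    by (rule ext) (auto simp: lift2_def env_cons_def split: nat.splits)
  with ERec show ?case by (simp add: comp_def)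
qed auto

lemma wf_prexp_rename: "wf_prexp m a \<Longrightarrow> (\<And>i. i < m \<Longrightarrow> f i < n) \<Longrightarrow> wf_prexp n (rename f a)"
proof (induction a arbitrary: f m n)
  case (ERec b s m')
  have "wf_prexp (Suc (Suc n)) (rename (lift2 f) s)"
    using ERec.prems by (intro ERec.IH(2)[where m="Suc (Suc m)"]) (auto simp: lift2_def)
  with ERec show ?case by auto
qed auto

definition shift2 :: "prexp \<Rightarrow> prexp" where
  "shift2 a = rename (\<lambda>i. i + 2) a"

lemma peval_shift2 [simp]: "peval fs (shift2 a) (r \<triangleright> k \<triangleright> e) = peval fs a e"
  unfolding shift2_def peval_rename by (simp add: comp_def)

lemma wf_prexp_shift2 [simp]: "wf_prexp n a \<Longrightarrow> wf_prexp (Suc (Suc n)) (shift2 a)"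
  unfolding shift2_def by (erule wf_prexp_rename) simp

definition padd :: "prexp \<Rightarrow> prexp \<Rightarrow> prexp" where
  "padd a b = ERec a (ESuc (EVar 0)) b"

lemma peval_padd [simp]: "peval fs (padd a b) e = peval fs a e + peval fs b e"
proof -
  have "rec_nat x (\<lambda>k r. Suc r) y = x + y" for x y :: nat by (induct y) auto
  then show ?thesis unfolding padd_def by simp
qed

definition ppred :: "prexp \<Rightarrow> prexp" where
  "ppred a = ERec EZero (EVar 1) a"

lemma peval_ppred [simp]: "peval fs (ppred a) e = peval fs a e - 1"
proof -
  have "rec_nat 0 (\<lambda>k r. k) y = y - 1" for y :: nat by (induct y) auto
  then show ?thesis unfolding ppred_def by simp
qed

definition psub :: "prexp \<Rightarrow> prexp \<Rightarrow> prexp" where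
  "psub a b = ERec a (ppred (EVar 0)) b"

lemma peval_psub [simp]: "peval fs (psub a b) e = peval fs a e - peval fs b e"
proof -
  have "rec_nat x (\<lambda>k r. r - 1) y = x - y" for x y :: nat by (induct y) auto
  then show ?thesis unfolding psub_def by simp
qed

definition pmul :: "prexp \<Rightarrow> prexp \<Rightarrow> prexp" where
  "pmul a b = ERec EZero (padd (EVar 0) (shift2 a)) b"

lemma peval_pmul [simp]: "peval fs (pmul a b) e = peval fs a e * peval fs b e"
proof -
  have "rec_nat 0 (\<lambda>k r. r + x) y = x * y" for x y :: nat by (induct y) auto
  then show ?thesis unfolding pmul_def by simp
qed

definition ppow2 :: "prexp \<Rightarrow> prexp" where
  "ppow2 a = ERec (ESuc EZero) (padd (EVar 0) (EVar 0)) a"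

lemma peval_ppow2 [simp]: "peval fs (ppow2 a) e = 2 ^ peval fs a e"
proof -
  have "rec_nat 1 (\<lambda>k r. r + r) y = (2::nat) ^ y" for y :: nat by (induct y) auto
  then show ?thesis unfolding ppow2_def by simp
qed

definition pnonzero :: "prexp \<Rightarrow> prexp" where
  "pnonzero a = ERec EZero (ESuc EZero) a"

lemma peval_pnonzero [simp]: "peval fs (pnonzero a) e = of_bool (peval fs a e \<noteq> 0)"
  unfolding pnonzero_def by (cases "peval fs a e") auto

definition pzero :: "prexp \<Rightarrow> prexp" where
  "pzero a = psub (ESuc EZero) (pnonzero a)"

lemma peval_pzero [simp]: "peval fs (pzero a) e = of_bool (peval fs a e = 0)"
  unfolding pzero_def by simp

definition peq :: "prexp \<Rightarrow> prexp \<Rightarrow> prexp" where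
  "peq a b = pzero (padd (psub a b) (psub b a))"

lemma peval_peq [simp]: "peval fs (peq a b) e = of_bool (peval fs a e = peval fs b e)"
  unfolding peq_def by simp

definition ple :: "prexp \<Rightarrow> prexp \<Rightarrow> prexp" where
  "ple a b = pzero (psub a b)"

lemma peval_ple [simp]: "peval fs (ple a b) e = of_bool (peval fs a e \<le> peval fs b e)"
  unfolding ple_def by simp

definition pless :: "prexp \<Rightarrow> prexp \<Rightarrow> prexp" where
  "pless a b = ple (ESuc a) b"

lemma peval_pless [simp]: "peval fs (pless a b) e = of_bool (peval fs a e < peval fs b e)"
  unfolding pless_def by simp

definition por :: "prexp \<Rightarrow> prexp \<Rightarrow> prexp" where
  "por a b = pnonzero (padd a b)"

lemma peval_por [simp]: "peval fs (por a b) e = of_bool (peval fs a e \<noteq> 0 \<or> peval fs b e \<noteq> 0)"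
  unfolding por_def by simp

definition pif :: "prexp \<Rightarrow> prexp \<Rightarrow> prexp \<Rightarrow> prexp" where
  "pif c a b = padd (pmul (pnonzero c) a) (pmul (pzero c) b)"

lemma peval_pif [simp]:
  "peval fs (pif c a b) e = (if peval fs c e = 0 then peval fs b e else peval fs a e)"
  unfolding pif_def by simp

fun pnum :: "nat \<Rightarrow> prexp" where
  "pnum 0 = EZero"
| "pnum (Suc k) = ESuc (pnum k)"

lemma peval_pnum [simp]: "peval fs (pnum k) e = k"
  by (induct k) auto

lemma wf_prexp_pnum [simp]: "wf_prexp n (pnum k)"
  by (induct k) auto

text \<open>In the summand of \<open>psum p m\<close>, variable 0 is the summation index and the outer
  environment starts at variable 1; \<open>skip_acc\<close> hides the accumulator of the recursion.\<close>

definition skip_acc :: "nat \<Rightarrow> nat" where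
  "skip_acc i = (case i of 0 \<Rightarrow> 1 | Suc j \<Rightarrow> j + 2)"

definition psum :: "prexp \<Rightarrow> prexp \<Rightarrow> prexp" where
  "psum p m = ERec EZero (padd (EVar 0) (rename skip_acc p)) m"

lemma peval_psum [simp]: "peval fs (psum p m) e = (\<Sum>i<peval fs m e. peval fs p (i \<triangleright> e))"
proof -
  have skip: "(r \<triangleright> k \<triangleright> e) \<circ> skip_acc = k \<triangleright> e" for r k
    by (rule ext) (auto simp: skip_acc_def env_cons_def split: nat.splits)
  have "rec_nat 0 (\<lambda>k r. r + peval fs p (k \<triangleright> e)) y = (\<Sum>i<y. peval fs p (i \<triangleright> e))" for y
    by (induct y) auto
  then show ?thesis unfolding psum_def by (simp add: peval_rename skip)
qed

lemma wf_prexp_psum [simp]: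
  assumes "wf_prexp (Suc n) p" and "wf_prexp n m"
  shows "wf_prexp n (psum p m)"
proof -
  have "wf_prexp (Suc (Suc n)) (rename skip_acc p)"
    by (rule wf_prexp_rename[OF assms(1)]) (auto simp: skip_acc_def split: nat.splits)
  with assms show ?thesis unfolding psum_def padd_def by simp
qed

definition pex :: "prexp \<Rightarrow> prexp \<Rightarrow> prexp" where
  "pex p m = pnonzero (psum p (ESuc m))"

lemma peval_pex [simp]:
  "peval fs (pex p m) e = of_bool (\<exists>i\<le>peval fs m e. peval fs p (i \<triangleright> e) \<noteq> 0)"
  unfolding pex_def by (simp add: lessThan_Suc_atMost)

lemma Suc_div_eq:
  assumes "0 < (b::nat)"
  shows "Suc k div b = k div b + of_bool ((k div b + 1) * b \<le> Suc k)"
proof (cases "(k div b + 1) * b \<le> Suc k")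
  case True
  have "k < (k div b + 1) * b"
    using mod_less_divisor[OF assms, of k] div_mult_mod_eq[of k b] unfolding distrib_right by linarith
  with True have "Suc k = (k div b + 1) * b" by linarith
  then have "Suc k div b = k div b + 1"
    using assms by (metis nonzero_mult_div_cancel_right less_not_refl2)
  then show ?thesis using True by simp
next
  case False
  have "b * (k div b) \<le> Suc k"
    using div_mult_mod_eq[of k b] unfolding mult.commute[of b] by linarith
  moreover have "Suc k < b * Suc (k div b)" using False by (simp add: algebra_simps)
  ultimately have "Suc k div b = k div b" by (rule div_nat_eqI)
  then show ?thesis using False by simp
qed

definition pdiv :: "prexp \<Rightarrow> prexp \<Rightarrow> prexp" where
  "pdiv a b = ERec EZero
     (padd (EVar 0) (pmul (pnonzero (shift2 b)) (ple (pmul (ESuc (EVar 0)) (shift2 b)) (ESuc (EVar 1))))) a"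

lemma peval_pdiv [simp]: "peval fs (pdiv a b) e = peval fs a e div peval fs b e"
proof -
  have "rec_nat 0 (\<lambda>k r. r + of_bool (x \<noteq> 0) * of_bool (Suc r * x \<le> Suc k)) y = y div x"
    for x y :: nat
    by (induct y) (cases "x = 0", simp_all add: Suc_div_eq)
  then show ?thesis unfolding pdiv_def by simp
qed

definition pmod :: "prexp \<Rightarrow> prexp \<Rightarrow> prexp" where
  "pmod a b = psub a (pmul (pdiv a b) b)"

lemma peval_pmod [simp]: "peval fs (pmod a b) e = peval fs a e mod peval fs b e"
  unfolding pmod_def by (simp add: minus_div_mult_eq_mod)

definition ptriangle :: "prexp \<Rightarrow> prexp" where
  "ptriangle a = ERec EZero (padd (EVar 0) (ESuc (EVar 1))) a"

lemma peval_ptriangle [simp]: "peval fs (ptriangle a) e = triangle (peval fs a e)"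
proof -
  have "rec_nat 0 (\<lambda>k r. r + Suc k) y = triangle y" for y by (induct y) auto
  then show ?thesis unfolding ptriangle_def by simp
qed

definition ppair :: "prexp \<Rightarrow> prexp \<Rightarrow> prexp" where
  "ppair a b = padd (ptriangle (padd a b)) a"

lemma peval_ppair [simp]: "peval fs (ppair a b) e = prod_encode (peval fs a e, peval fs b e)"
  unfolding ppair_def by (simp add: prod_encode_def)

lemma wf_prexp_unary [simp]:
  assumes "wf_prexp n a"
  shows "wf_prexp n (ppred a)" "wf_prexp n (ppow2 a)" "wf_prexp n (pnonzero a)"
    "wf_prexp n (pzero a)" "wf_prexp n (ptriangle a)"
  using assms by (simp_all add: padd_def ppred_def psub_def pmul_def ppow2_def pnonzero_def pzero_def
      peq_def ple_def pless_def por_def pif_def pdiv_def pmod_def ptriangle_def ppair_def)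

lemma wf_prexp_binary [simp]:
  assumes "wf_prexp n a" and "wf_prexp n b"
  shows "wf_prexp n (padd a b)" "wf_prexp n (psub a b)" "wf_prexp n (pmul a b)"
    "wf_prexp n (peq a b)" "wf_prexp n (ple a b)" "wf_prexp n (pless a b)" "wf_prexp n (por a b)"
    "wf_prexp n (pdiv a b)" "wf_prexp n (pmod a b)" "wf_prexp n (ppair a b)"
  using assms by (simp_all add: padd_def ppred_def psub_def pmul_def ppow2_def pnonzero_def pzero_def
      peq_def ple_def pless_def por_def pif_def pdiv_def pmod_def ptriangle_def ppair_def)

lemma wf_prexp_pif [simp]:
  "wf_prexp n c \<Longrightarrow> wf_prexp n a \<Longrightarrow> wf_prexp n b \<Longrightarrow> wf_prexp n (pif c a b)"
  by (simp add: padd_def ppred_def psub_def pmul_def ppow2_def pnonzero_def pzero_def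
      peq_def ple_def pless_def por_def pif_def pdiv_def pmod_def ptriangle_def ppair_def)

lemma wf_prexp_pex [simp]: "wf_prexp (Suc n) p \<Longrightarrow> wf_prexp n m \<Longrightarrow> wf_prexp n (pex p m)"
  unfolding pex_def pnonzero_def by simp

section \<open>Arithmetization of the test\<close>

text \<open>Oracle 0 is the numerator code \<open>a\<close>, oracle 1 the denominator \<open>d\<close> of the
  approximations, oracle 2 the characteristic function \<open>chi\<close> of \<open>R\<close>.\<close>

definition oracles :: "(nat \<Rightarrow> nat) \<Rightarrow> (nat \<Rightarrow> nat) \<Rightarrow> (nat \<Rightarrow> nat) \<Rightarrow> nat \<Rightarrow> nat \<Rightarrow> nat" where
  "oracles a d chi j = (if j = 0 then a else if j = 1 then d else chi)"

definition decode_pos :: "nat \<Rightarrow> nat" where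
  "decode_pos A = (if A mod 2 = 0 then A div 2 else 0)"

definition decode_neg :: "nat \<Rightarrow> nat" where
  "decode_neg A = (if A mod 2 = 0 then 0 else A div 2 + 1)"

lemma int_decode_eq_pos_minus_neg: "int_decode A = int (decode_pos A) - int (decode_neg A)"
  unfolding int_decode_def sum_decode_def decode_pos_def decode_neg_def
  by (auto simp: even_iff_mod_2_eq_zero split: sum.splits)

definition pdecode_pos :: "prexp \<Rightarrow> prexp" where
  "pdecode_pos i = pmul (pzero (pmod (ECall 0 i) (pnum 2))) (pdiv (ECall 0 i) (pnum 2))"

definition pdecode_neg :: "prexp \<Rightarrow> prexp" where
  "pdecode_neg i = pmul (pnonzero (pmod (ECall 0 i) (pnum 2))) (ESuc (pdiv (ECall 0 i) (pnum 2)))"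

definition pden :: "prexp \<Rightarrow> prexp" where
  "pden i = ESuc (ECall 1 i)"

lemma peval_pdecode [simp]:
  "peval (oracles a d chi) (pdecode_pos i) e = decode_pos (a (peval (oracles a d chi) i e))"
  "peval (oracles a d chi) (pdecode_neg i) e = decode_neg (a (peval (oracles a d chi) i e))"
  "peval (oracles a d chi) (pden i) e = Suc (d (peval (oracles a d chi) i e))"
  unfolding pdecode_pos_def pdecode_neg_def pden_def decode_pos_def decode_neg_def
  by (simp_all add: oracles_def)

lemma wf_prexp_pdecode [simp]:
  "wf_prexp n i \<Longrightarrow> wf_prexp n (pdecode_pos i)"
  "wf_prexp n i \<Longrightarrow> wf_prexp n (pdecode_neg i)"
  "wf_prexp n i \<Longrightarrow> wf_prexp n (pden i)"
  unfolding pdecode_pos_def pdecode_neg_def pden_def by simp_all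

text \<open>Bit \<open>i\<close> of \<open>(P - N) / D\<close>; adding \<open>2 N D\<close> makes the numerator nonnegative
  without changing the bits after the binary point.\<close>

definition frac_bit :: "nat \<Rightarrow> nat \<Rightarrow> nat \<Rightarrow> nat \<Rightarrow> nat" where
  "frac_bit i P N D = ((P + 2 * (N * D) - N) * 2 ^ Suc i div D) mod 2"

definition pfrac_bit :: "prexp \<Rightarrow> prexp \<Rightarrow> prexp \<Rightarrow> prexp \<Rightarrow> prexp" where
  "pfrac_bit i P N D =
     pmod (pdiv (pmul (psub (padd P (pmul (pnum 2) (pmul N D))) N) (ppow2 (ESuc i))) D) (pnum 2)"

lemma peval_pfrac_bit [simp]:
  "peval fs (pfrac_bit i P N D) e = frac_bit (peval fs i e) (peval fs P e) (peval fs N e) (peval fs D e)"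
  unfolding pfrac_bit_def frac_bit_def by simp

lemma wf_prexp_pfrac_bit [simp]:
  "wf_prexp n i \<Longrightarrow> wf_prexp n P \<Longrightarrow> wf_prexp n N \<Longrightarrow> wf_prexp n D \<Longrightarrow> wf_prexp n (pfrac_bit i P N D)"
  unfolding pfrac_bit_def by simp

text \<open>The code of the list of those bits at positions \<open>K - t, \<dots>, K - 1\<close> which are selected
  by \<open>chi\<close>, built from the right via \<open>code_str (b # \<sigma>) = Suc (prod_encode (b, code_str \<sigma>))\<close>.\<close>

definition selected_bits_code :: "(nat \<Rightarrow> nat) \<Rightarrow> nat \<Rightarrow> nat \<Rightarrow> nat \<Rightarrow> nat \<Rightarrow> nat \<Rightarrow> nat" where
  "selected_bits_code chi K P N D t = rec_nat 0 (\<lambda>t r. if chi (K - t - 1) = 0 then r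
       else Suc (prod_encode (frac_bit (K - t - 1) P N D, r))) t"

definition pselected_bits_code :: "prexp \<Rightarrow> prexp \<Rightarrow> prexp \<Rightarrow> prexp \<Rightarrow> prexp" where
  "pselected_bits_code K P N D =
     (let pos = psub (psub (shift2 K) (EVar 1)) (pnum 1) in
      ERec EZero (pif (ECall 2 pos)
        (ESuc (ppair (pfrac_bit pos (shift2 P) (shift2 N) (shift2 D)) (EVar 0))) (EVar 0)) K)"

lemma peval_pselected_bits_code [simp]:
  "peval (oracles a d chi) (pselected_bits_code K P N D) e =
   selected_bits_code chi (peval (oracles a d chi) K e) (peval (oracles a d chi) P e)
     (peval (oracles a d chi) N e) (peval (oracles a d chi) D e) (peval (oracles a d chi) K e)"
  unfolding pselected_bits_code_def selected_bits_code_def Let_def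
  by (simp add: oracles_def cong: if_cong)

lemma wf_prexp_pselected_bits_code [simp]:
  "wf_prexp n K \<Longrightarrow> wf_prexp n P \<Longrightarrow> wf_prexp n N \<Longrightarrow> wf_prexp n D \<Longrightarrow>
   wf_prexp n (pselected_bits_code K P N D)"
  unfolding pselected_bits_code_def Let_def by simp

text \<open>Integer-arithmetic form of: \<open>Om n < Om s\<close>, \<open>K = k_stage Om n s\<close>, and \<open>x\<close> codes \<open>n\<close>
  together with the \<open>R\<close>-bits below \<open>K\<close> of \<open>Om s + j / 2^K\<close> (see \<open>test_code_arith_iff\<close>).\<close>

definition test_code_arith ::
  "(nat \<Rightarrow> nat) \<Rightarrow> (nat \<Rightarrow> nat) \<Rightarrow> (nat \<Rightarrow> nat) \<Rightarrow> nat \<Rightarrow> nat \<Rightarrow> nat \<Rightarrow> nat \<Rightarrow> nat \<Rightarrow> nat \<Rightarrow> bool" where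
  "test_code_arith a d chi K j s c n x \<longleftrightarrow>
    (let Ps = decode_pos (a s); Ns = decode_neg (a s); Ds = Suc (d s);
         Pn = decode_pos (a n); Nn = decode_neg (a n); Dn = Suc (d n);
         Nq = (Ps * Dn + Nn * Ds) - (Pn * Ds + Ns * Dn); Dq = Ds * Dn in
     x = prod_encode (n, c) \<and> Pn * Ds + Ns * Dn < Ps * Dn + Nn * Ds \<and>
     Dq < Nq * 2 ^ Suc K \<and> (K = 0 \<or> Nq * 2 ^ K \<le> Dq) \<and>
     c = selected_bits_code chi K (Ps * 2 ^ K + j * Ds) (Ns * 2 ^ K) (Ds * 2 ^ K) K)"

text \<open>Variable 5 is the search bound of \<open>ptest_enum\<close>; it does not occur here.\<close>

definition ptest_code :: prexp where
  "ptest_code =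
    (let K = EVar 0; j = EVar 1; s = EVar 2; c = EVar 3; n = EVar 4; x = EVar 6;
         Ps = pdecode_pos s; Ns = pdecode_neg s; Ds = pden s;
         Pn = pdecode_pos n; Nn = pdecode_neg n; Dn = pden n;
         Nq = psub (padd (pmul Ps Dn) (pmul Nn Ds)) (padd (pmul Pn Ds) (pmul Ns Dn));
         Dq = pmul Ds Dn in
     pmul (peq x (ppair n c))
      (pmul (pless (padd (pmul Pn Ds) (pmul Ns Dn)) (padd (pmul Ps Dn) (pmul Nn Ds)))
       (pmul (pmul (pless Dq (pmul Nq (ppow2 (ESuc K)))) (por (peq K EZero) (ple (pmul Nq (ppow2 K)) Dq)))
        (peq c (pselected_bits_code K (padd (pmul Ps (ppow2 K)) (pmul j Ds)) (pmul Ns (ppow2 K))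
          (pmul Ds (ppow2 K)))))))"

lemma wf_prexp_ptest_code: "wf_prexp 7 ptest_code"
  unfolding ptest_code_def Let_def by simp

lemma peval_ptest_code:
  "peval (oracles a d chi) ptest_code (K \<triangleright> j \<triangleright> s \<triangleright> c \<triangleright> n \<triangleright> y \<triangleright> x \<triangleright> e) =
   of_bool (test_code_arith a d chi K j s c n x)"
  unfolding ptest_code_def Let_def
  apply (simp only: peval_pmul peval_peq peval_pless peval_ple peval_por peval_pselected_bits_code
      peval_padd peval_psub peval_ppow2 peval.simps peval_pdecode peval_ppair of_bool_conj[symmetric]
      of_bool_eq_0_iff not_not env_cons_0 env_cons_Suc env_cons_1 env_cons_numeral pred_numeral_simps BitM.simps)
  apply (simp only: test_code_arith_def Let_def of_bool_eq_iff conj_assoc)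
  done

definition ptest_enum :: prexp where
  "ptest_enum = pzero (pex (pex (pex (pex (pex ptest_code (EVar 4)) (pnum 1)) (EVar 2)) (EVar 2)) (EVar 1))"

lemma wf_prexp_ptest_enum: "wf_prexp 2 ptest_enum"
  unfolding ptest_enum_def using wf_prexp_ptest_code by (simp add: numeral_eq_Suc)

lemma peval_ptest_enum:
  "peval (oracles a d chi) ptest_enum (y \<triangleright> x \<triangleright> e) =
   of_bool (\<not> (\<exists>n\<le>x. \<exists>c\<le>x. \<exists>s\<le>y. \<exists>j\<le>1. \<exists>K\<le>y. test_code_arith a d chi K j s c n x))"
  unfolding ptest_enum_def
  by (simp only: peval_pzero peval_pex peval_ptest_code of_bool_eq_0_iff not_not peval.simps
      env_cons_0 env_cons_Suc env_cons_1 env_cons_numeral pred_numeral_simps BitM.simps peval_pnum)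

lemma bounded_exists_max_witness:
  fixes n c s j K x :: nat
  assumes "P K j s c n" and "n \<le> x" and "c \<le> x" and "j \<le> 1"
  shows "\<exists>n\<le>x. \<exists>c\<le>x. \<exists>s'\<le>max s K. \<exists>j\<le>1. \<exists>K'\<le>max s K. P K' j s' c n"
  using assms max.cobounded1[of s K] max.cobounded2[of K s] by blast

lemma ce_set_test_codes:
  assumes "computable_fun a" "computable_fun d" "computable_fun chi"
  shows "ce_set {x. \<exists>n c s j K. j \<le> 1 \<and> test_code_arith a d chi K j s c n x}"
proof -
  let ?zeros = "{x. \<exists>y. peval (oracles a d chi) ptest_enum (y \<triangleright> x \<triangleright> (\<lambda>_. 0)) = 0}"
  have "?zeros = {x. \<exists>n c s j K. j \<le> 1 \<and> test_code_arith a d chi K j s c n x}"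
  proof (rule set_eqI, rule iffI)
    fix x assume "x \<in> ?zeros"
    then obtain y where "peval (oracles a d chi) ptest_enum (y \<triangleright> x \<triangleright> (\<lambda>_. 0)) = 0" by blast
    then have "\<exists>n\<le>x. \<exists>c\<le>x. \<exists>s\<le>y. \<exists>j\<le>1. \<exists>K\<le>y. test_code_arith a d chi K j s c n x"
      unfolding peval_ptest_enum of_bool_eq_0_iff not_not .
    then show "x \<in> {x. \<exists>n c s j K. j \<le> 1 \<and> test_code_arith a d chi K j s c n x}" by blast
  next
    fix x assume "x \<in> {x. \<exists>n c s j K. j \<le> 1 \<and> test_code_arith a d chi K j s c n x}"
    then obtain n c s j K where j: "j \<le> 1" and code: "test_code_arith a d chi K j s c n x" by blast
    from code have "x = prod_encode (n, c)" unfolding test_code_arith_def Let_def by (rule conjunct1)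
    then have "n \<le> x" "c \<le> x" by (simp_all add: le_prod_encode_1 le_prod_encode_2)
    with j code have "\<exists>n\<le>x. \<exists>c\<le>x. \<exists>s'\<le>max s K. \<exists>j\<le>1. \<exists>K'\<le>max s K. test_code_arith a d chi K' j s' c n x"
      by (intro bounded_exists_max_witness[where P="\<lambda>K j s c n. test_code_arith a d chi K j s c n x"])
    then have "peval (oracles a d chi) ptest_enum (max s K \<triangleright> x \<triangleright> (\<lambda>_. 0)) = 0"
      unfolding peval_ptest_enum of_bool_eq_0_iff not_not .
    then show "x \<in> ?zeros" by blast
  qed
  moreover have "ce_set ?zeros"
    by (rule ce_set_exists_zero[OF _ wf_prexp_ptest_enum]) (use assms in \<open>simp add: oracles_def\<close>)
  ultimately show ?thesis by simp
qed

lemma nat_floor_neg_log2_eq_iff: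
  assumes q: "0 < (q::real)"
  shows "nat \<lfloor>- log 2 q\<rfloor> = K \<longleftrightarrow> 1 < q * 2 ^ Suc K \<and> (K = 0 \<or> q * 2 ^ K \<le> 1)"
proof -
  have log_mult_pow2: "log 2 (q * 2 ^ m) = log 2 q + m" for m :: nat
    using q by (simp add: log_mult log_nat_power)
  have upper: "1 < q * 2 ^ Suc K \<longleftrightarrow> - log 2 q < Suc K"
  proof -
    have "1 < q * 2 ^ Suc K \<longleftrightarrow> 0 < log 2 (q * 2 ^ Suc K)"
      using q by (subst zero_less_log_cancel_iff) auto
    then show ?thesis using log_mult_pow2[of "Suc K"] by linarith
  qed
  have lower: "q * 2 ^ K \<le> 1 \<longleftrightarrow> K \<le> - log 2 q"
  proof -
    have "q * 2 ^ K \<le> 1 \<longleftrightarrow> log 2 (q * 2 ^ K) \<le> 0"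
      using q by (subst log_le_zero_cancel_iff) auto
    then show ?thesis using log_mult_pow2[of K] by linarith
  qed
  have "nat \<lfloor>- log 2 q\<rfloor> = K \<longleftrightarrow> - log 2 q < Suc K \<and> (K = 0 \<or> K \<le> - log 2 q)"
  proof (cases K)
    case 0 then show ?thesis by (auto simp: floor_less_iff)
  next
    case (Suc k)
    then show ?thesis by (auto simp: nat_eq_iff le_floor_iff floor_less_iff) linarith+
  qed
  then show ?thesis unfolding upper lower .
qed

lemma frac_bit_eq_real_bits:
  assumes "0 < D"
  shows "frac_bit i P N D = of_bool (real_bits ((real P - real N) / real D) i)"
proof -
  define y where "y = (real P - real N) / real D"
  define num where "num = P + 2 * (N * D) - N"
  have "N \<le> N * D" using assms by simp
  then have "N \<le> P + 2 * (N * D)" by linarith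
  then have real_num: "real num = real P - real N + 2 * real N * real D"
    unfolding num_def by (simp add: of_nat_diff)
  have "real num * 2 ^ Suc i / real D = y * 2 ^ Suc i + of_int (2 * int N * 2 ^ Suc i)"
    unfolding y_def real_num using assms by (simp add: field_simps)
  then have "\<lfloor>real num * 2 ^ Suc i / real D\<rfloor> = \<lfloor>y * 2 ^ Suc i\<rfloor> + 2 * int N * 2 ^ Suc i"
    by (metis floor_add_int)
  moreover have "\<lfloor>real num * 2 ^ Suc i / real D\<rfloor> = int (num * 2 ^ Suc i div D)"
    using floor_divide_of_nat_eq[of "num * 2 ^ Suc i" D] by simp
  ultimately have "int (num * 2 ^ Suc i div D) = \<lfloor>y * 2 ^ Suc i\<rfloor> + 2 * (int N * 2 ^ Suc i)"
    by simp
  then have "odd (int (num * 2 ^ Suc i div D)) \<longleftrightarrow> odd \<lfloor>y * 2 ^ Suc i\<rfloor>" by simp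
  then show ?thesis unfolding frac_bit_def real_bits_def y_def num_def
    by (auto simp: odd_iff_mod_2_eq_one)
qed

lemma code_str_Cons: "code_str (b # \<sigma>) = Suc (prod_encode (of_bool b, code_str \<sigma>))"
  by (simp add: code_str_def)

lemma code_str_Nil: "code_str [] = 0"
  by (simp add: code_str_def)

lemma code_str_inject: "code_str \<sigma> = code_str \<tau> \<longleftrightarrow> \<sigma> = \<tau>"
proof -
  have "inj (\<lambda>b::bool. if b then 1 else (0::nat))" by (rule injI) (auto split: if_splits)
  then show ?thesis unfolding code_str_def list_encode_eq by (simp add: inj_map_eq_map)
qed

lemma selected_bits_code_eq:
  assumes "0 < D" and "t \<le> K"
  shows "selected_bits_code (\<lambda>i. if i \<in> R then 1 else 0) K P N D t =
    code_str (map (real_bits ((real P - real N) / real D)) (filter (\<lambda>i. i \<in> R) [K - t..<K]))"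
  using assms(2)
proof (induction t)
  case 0 then show ?case by (simp add: selected_bits_code_def code_str_Nil)
next
  case (Suc t)
  have "[K - Suc t..<K] = (K - Suc t) # [K - t..<K]"
    using Suc.prems by (simp add: upt_conv_Cons Suc_diff_Suc)
  with Suc show ?case
    by (auto simp: selected_bits_code_def frac_bit_eq_real_bits[OF assms(1)] code_str_Cons)
qed

definition restricted_prefix :: "nat set \<Rightarrow> real \<Rightarrow> nat \<Rightarrow> bool list" where
  "restricted_prefix R x K = map (real_bits x) (filter (\<lambda>i. i \<in> R) [0..<K])"

lemma test_code_arith_iff:
  assumes Om: "\<And>s. Om s = real_of_int (int_decode (a s)) / real (Suc (d s))"
  shows "test_code_arith a d (\<lambda>i. if i \<in> R then 1 else 0) K j s c n x \<longleftrightarrow>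
    x = prod_encode (n, c) \<and> Om n < Om s \<and> K = k_stage Om n s \<and>
    c = code_str (restricted_prefix R (Om s + real j / 2 ^ K) K)"
proof -
  define Ps where "Ps = decode_pos (a s)"
  define Ns where "Ns = decode_neg (a s)"
  define Ds where "Ds = Suc (d s)"
  define Pn where "Pn = decode_pos (a n)"
  define Nn where "Nn = decode_neg (a n)"
  define Dn where "Dn = Suc (d n)"
  define Nq where "Nq = (Ps * Dn + Nn * Ds) - (Pn * Ds + Ns * Dn)"
  define Dq where "Dq = Ds * Dn"
  have Om_s: "Om s = (real Ps - real Ns) / real Ds"
    unfolding Om Ps_def Ns_def Ds_def int_decode_eq_pos_minus_neg by simp
  have Om_n: "Om n = (real Pn - real Nn) / real Dn"
    unfolding Om Pn_def Nn_def Dn_def int_decode_eq_pos_minus_neg by simp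
  have "0 < Ds" "0 < Dn" by (simp_all add: Ds_def Dn_def)
  have less_iff: "Pn * Ds + Ns * Dn < Ps * Dn + Nn * Ds \<longleftrightarrow> Om n < Om s"
  proof -
    have "Om n < Om s \<longleftrightarrow> (real Pn - real Nn) * real Ds < (real Ps - real Ns) * real Dn"
      unfolding Om_s Om_n using \<open>0 < Ds\<close> \<open>0 < Dn\<close>
      by (simp add: divide_less_eq less_divide_eq field_simps)
    also have "\<dots> \<longleftrightarrow> real (Pn * Ds + Ns * Dn) < real (Ps * Dn + Nn * Ds)"
      by (simp add: algebra_simps)
    finally show ?thesis by (simp only: of_nat_less_iff)
  qed
  have k_iff: "(Dq < Nq * 2 ^ Suc K \<and> (K = 0 \<or> Nq * 2 ^ K \<le> Dq)) \<longleftrightarrow> K = k_stage Om n s"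
    if "Om n < Om s"
  proof -
    have "real Nq = real (Ps * Dn + Nn * Ds) - real (Pn * Ds + Ns * Dn)"
      unfolding Nq_def using that less_iff by (simp add: of_nat_diff)
    then have q: "Om s - Om n = real Nq / real Dq"
      unfolding Om_s Om_n Dq_def using \<open>0 < Ds\<close> \<open>0 < Dn\<close> by (simp add: field_simps)
    have "0 < Dq" using \<open>0 < Ds\<close> \<open>0 < Dn\<close> by (simp add: Dq_def)
    have less: "Dq < Nq * 2 ^ m \<longleftrightarrow> 1 < (Om s - Om n) * 2 ^ m" for m :: nat
    proof -
      have "Dq < Nq * 2 ^ m \<longleftrightarrow> real Dq < real Nq * 2 ^ m"
        by (metis of_nat_less_iff of_nat_mult of_nat_numeral of_nat_power)
      also have "\<dots> \<longleftrightarrow> 1 < (Om s - Om n) * 2 ^ m"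
        unfolding q using \<open>0 < Dq\<close> by (simp add: field_simps)
      finally show ?thesis .
    qed
    have le: "Nq * 2 ^ m \<le> Dq \<longleftrightarrow> (Om s - Om n) * 2 ^ m \<le> 1" for m :: nat
    proof -
      have "Nq * 2 ^ m \<le> Dq \<longleftrightarrow> real Nq * 2 ^ m \<le> real Dq"
        by (metis of_nat_le_iff of_nat_mult of_nat_numeral of_nat_power)
      also have "\<dots> \<longleftrightarrow> (Om s - Om n) * 2 ^ m \<le> 1"
        unfolding q using \<open>0 < Dq\<close> by (simp add: field_simps)
      finally show ?thesis .
    qed
    show ?thesis
      unfolding less le k_stage_def using nat_floor_neg_log2_eq_iff[of "Om s - Om n" K] that by auto
  qed
  have "(real (Ps * 2 ^ K + j * Ds) - real (Ns * 2 ^ K)) / real (Ds * 2 ^ K) = Om s + real j / 2 ^ K"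
    unfolding Om_s using \<open>0 < Ds\<close> by (simp add: field_simps)
  then have bits: "selected_bits_code (\<lambda>i. if i \<in> R then 1 else 0) K (Ps * 2 ^ K + j * Ds)
      (Ns * 2 ^ K) (Ds * 2 ^ K) K = code_str (restricted_prefix R (Om s + real j / 2 ^ K) K)"
    using selected_bits_code_eq[of "Ds * 2 ^ K" K K R] \<open>0 < Ds\<close> by (simp add: restricted_prefix_def)
  have "test_code_arith a d (\<lambda>i. if i \<in> R then 1 else 0) K j s c n x \<longleftrightarrow>
     (x = prod_encode (n, c) \<and> Pn * Ds + Ns * Dn < Ps * Dn + Nn * Ds \<and>
      Dq < Nq * 2 ^ Suc K \<and> (K = 0 \<or> Nq * 2 ^ K \<le> Dq) \<and>
      c = code_str (restricted_prefix R (Om s + real j / 2 ^ K) K))"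
    unfolding test_code_arith_def Let_def Ps_def[symmetric] Ns_def[symmetric] Ds_def[symmetric]
      Pn_def[symmetric] Nn_def[symmetric] Dn_def[symmetric] Nq_def[symmetric] Dq_def[symmetric] bits ..
  then show ?thesis using less_iff k_iff by (cases "Om n < Om s") (auto simp del: power_Suc)
qed

lemma card_Int_lessThan_enumerate:
  assumes R: "infinite (R::nat set)"
  shows "card (R \<inter> {..<enumerate R m}) = m"
proof (induction m)
  case 0
  have "R \<inter> {..<enumerate R 0} = {}"
    by (auto simp: enumerate_0 dest: not_less_Least)
  then show ?case by simp
next
  case (Suc m)
  have "R \<inter> {..<enumerate R (Suc m)} = insert (enumerate R m) (R \<inter> {..<enumerate R m})"
  proof (rule set_eqI, rule iffI)
    fix y assume y: "y \<in> R \<inter> {..<enumerate R (Suc m)}"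
    show "y \<in> insert (enumerate R m) (R \<inter> {..<enumerate R m})"
    proof (rule ccontr)
      assume "\<not> ?thesis"
      with y have "enumerate R m < y" "y \<in> R" by auto
      then have "enumerate R (Suc m) \<le> y"
        unfolding enumerate_Suc''[OF R] by (intro Least_le) auto
      with y show False by auto
    qed
  next
    fix y assume "y \<in> insert (enumerate R m) (R \<inter> {..<enumerate R m})"
    then show "y \<in> R \<inter> {..<enumerate R (Suc m)}"
      using enumerate_in_set[OF R] enumerate_step[OF R, of m] by auto
  qed
  then show ?case using Suc by (simp add: card_insert_if)
qed

lemma less_card_Int_lessThan_iff:
  assumes R: "infinite (R::nat set)"
  shows "m < card (R \<inter> {..<K}) \<longleftrightarrow> enumerate R m < K"
proof
  assume m: "m < card (R \<inter> {..<K})"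
  show "enumerate R m < K"
  proof (rule ccontr)
    assume "\<not> enumerate R m < K"
    then have "card (R \<inter> {..<K}) \<le> card (R \<inter> {..<enumerate R m})"
      by (intro card_mono) auto
    with m show False using card_Int_lessThan_enumerate[OF R, of m] by simp
  qed
next
  assume "enumerate R m < K"
  then have "insert (enumerate R m) (R \<inter> {..<enumerate R m}) \<subseteq> R \<inter> {..<K}"
    using enumerate_in_set[OF R] by auto
  then have "card (insert (enumerate R m) (R \<inter> {..<enumerate R m})) \<le> card (R \<inter> {..<K})"
    by (intro card_mono) auto
  then show "m < card (R \<inter> {..<K})" using card_Int_lessThan_enumerate[OF R, of m] by simp
qed

lemma filter_mem_upt_eq_map_enumerate:
  assumes R: "infinite (R::nat set)"
  shows "filter (\<lambda>i. i \<in> R) [0..<K] = map (enumerate R) [0..<card (R \<inter> {..<K})]"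
proof (induction K)
  case 0 then show ?case by simp
next
  case (Suc K)
  show ?case
  proof (cases "K \<in> R")
    case True
    obtain m where m: "enumerate R m = K" using enumerate_Ex[OF R True] by blast
    then have "card (R \<inter> {..<K}) = m" using card_Int_lessThan_enumerate[OF R, of m] by simp
    moreover have "R \<inter> {..<Suc K} = insert K (R \<inter> {..<K})" using True by auto
    ultimately show ?thesis using Suc True m by simp
  next
    case False
    then have "R \<inter> {..<Suc K} = R \<inter> {..<K}" by (auto simp: less_Suc_eq)
    then show ?thesis using Suc False by simp
  qed
qed

lemma cylinder_restricted_prefix_iff:
  assumes "infinite (R::nat set)"
  shows "Y \<in> cylinder (restricted_prefix R x K) \<longleftrightarrow>
    (\<forall>m. enumerate R m < K \<longrightarrow> Y m = real_bits x (enumerate R m))"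
proof -
  have "Y \<in> cylinder (restricted_prefix R x K) \<longleftrightarrow>
      (\<forall>m<card (R \<inter> {..<K}). Y m = real_bits x (enumerate R m))"
    unfolding cylinder_def restricted_prefix_def filter_mem_upt_eq_map_enumerate[OF assms] by simp
  then show ?thesis using less_card_Int_lessThan_iff[OF assms] by blast
qed

lemma real_bits_eq_if_floor_eq:
  assumes "i < K" and "\<lfloor>x * 2 ^ K\<rfloor> = \<lfloor>y * 2 ^ K\<rfloor>"
  shows "real_bits x i = real_bits y i"
proof -
  have pow: "\<lfloor>z * 2 ^ Suc i\<rfloor> = \<lfloor>z * 2 ^ K\<rfloor> div 2 ^ (K - Suc i)" for z :: real
  proof -
    have "(2::real) ^ K = 2 ^ (K - Suc i) * 2 ^ Suc i"
      using assms(1) by (simp only: power_add[symmetric]) simp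
    then have "z * 2 ^ Suc i = z * 2 ^ K / real_of_int (2 ^ (K - Suc i))" by simp
    then show ?thesis using floor_divide_real_eq_div[of "2 ^ (K - Suc i)" "z * 2 ^ K"] by simp
  qed
  show ?thesis unfolding real_bits_def pow assms(2) ..
qed

lemma floor_pow2_two_choices:
  assumes "x \<le> z" and "z < x + 1 / 2 ^ K"
  obtains j :: nat where "j \<le> 1" and "\<lfloor>z * 2 ^ K\<rfloor> = \<lfloor>(x + real j / 2 ^ K) * 2 ^ K\<rfloor>"
proof -
  have "x * 2 ^ K \<le> z * 2 ^ K" "z * 2 ^ K < x * 2 ^ K + 1"
    using assms by (auto simp: field_simps)
  then consider "\<lfloor>z * 2 ^ K\<rfloor> = \<lfloor>x * 2 ^ K\<rfloor>" | "\<lfloor>z * 2 ^ K\<rfloor> = \<lfloor>x * 2 ^ K + 1\<rfloor>" by linarith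
  then show ?thesis
  proof cases
    case 1
    then have "\<lfloor>z * 2 ^ K\<rfloor> = \<lfloor>(x + real 0 / 2 ^ K) * 2 ^ K\<rfloor>" by simp
    then show ?thesis by (rule that[rotated]) simp
  next
    case 2
    also have "x * 2 ^ K + 1 = (x + real 1 / 2 ^ K) * 2 ^ K" by (simp add: field_simps)
    finally show ?thesis by (rule that[rotated]) simp
  qed
qed

lemma emeasure_cantor_prefix:
  "{Y. \<forall>m<r. Y m = b m} \<in> sets cantor_measure \<and>
   emeasure cantor_measure {Y. \<forall>m<r. Y m = b m} = ennreal ((1/2) ^ r)"
proof -
  let ?M = "\<lambda>_::nat. measure_pmf (bernoulli_pmf (1/2))"
  have eq: "{Y. \<forall>m<r. Y m = b m} = prod_emb UNIV ?M {..<r} (\<Pi>\<^sub>E m\<in>{..<r}. {b m})"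
  proof (rule set_eqI)
    fix Y :: "nat \<Rightarrow> bool"
    have "restrict Y {..<r} \<in> (\<Pi>\<^sub>E m\<in>{..<r}. {b m}) \<longleftrightarrow> (\<forall>m<r. Y m = b m)"
      by (simp add: PiE_iff) (meson lessThan_iff)
    then show "Y \<in> {Y. \<forall>m<r. Y m = b m} \<longleftrightarrow> Y \<in> prod_emb UNIV ?M {..<r} (\<Pi>\<^sub>E m\<in>{..<r}. {b m})"
      by (simp add: prod_emb_iff extensional_def)
  qed
  have "prod_emb UNIV ?M {..<r} (\<Pi>\<^sub>E m\<in>{..<r}. {b m}) \<in> sets (Pi\<^sub>M UNIV ?M)"
    by (rule sets_PiM_I) auto
  moreover have "emeasure (Pi\<^sub>M UNIV ?M) (prod_emb UNIV ?M {..<r} (\<Pi>\<^sub>E m\<in>{..<r}. {b m})) =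
      (\<Prod>i\<in>{..<r}. emeasure (?M i) {b i})"
    by (rule emeasure_PiM_emb) (auto simp: prob_space_measure_pmf)
  moreover have "(\<Prod>i\<in>{..<r}. emeasure (?M i) {b i}) = ennreal (1/2) ^ r"
    by (simp add: emeasure_pmf_single)
  moreover have "ennreal (1/2) ^ r = ennreal ((1/2) ^ r)"
    by (rule ennreal_power) simp
  ultimately show ?thesis unfolding eq cantor_measure_def by simp
qed

section \<open>The test and its capture of \<open>\<Omega>\<^sub>R\<close>\<close>

lemma k_stage_antimono:
  assumes "Om n < Om s" and "Om s \<le> Om s'"
  shows "k_stage Om n s' \<le> k_stage Om n s"
  unfolding k_stage_def using assms by (intro nat_mono floor_mono) simp

lemma k_stage_mono:
  assumes "Om n \<le> Om n'" and "Om n' < Om s"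
  shows "k_stage Om n s \<le> k_stage Om n' s"
  unfolding k_stage_def using assms by (intro nat_mono floor_mono) simp

lemma k_lim_le_k_stage:
  assumes "Om n < Om s" and "Om s \<le> \<Omega>"
  shows "k_lim \<Omega> Om n \<le> k_stage Om n s"
  unfolding k_stage_def k_lim_def using assms by (intro nat_mono floor_mono) simp

lemma k_stage_pow2_le:
  assumes "Om n < Om s" and "k_stage Om n s \<noteq> 0"
  shows "(Om s - Om n) * 2 ^ k_stage Om n s \<le> 1"
  using nat_floor_neg_log2_eq_iff[of "Om s - Om n" "k_stage Om n s"] assms unfolding k_stage_def by auto

definition test_set :: "(nat \<Rightarrow> real) \<Rightarrow> nat set \<Rightarrow> nat \<Rightarrow> (nat \<Rightarrow> bool) set" where
  "test_set Om R n = \<Union> {cylinder (restricted_prefix R (Om s + real j / 2 ^ k_stage Om n s) (k_stage Om n s))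
     | s j. j \<le> (1::nat) \<and> Om n < Om s}"

lemma restrict_seq_in_test_set:
  assumes inc: "incseq Om" and lim: "Om \<longlonglongrightarrow> \<Omega>" and below: "\<And>n. Om n < \<Omega>" and R: "infinite R"
  shows "restrict_seq R (real_bits \<Omega>) \<in> test_set Om R n"
proof -
  have le: "Om s \<le> \<Omega>" for s using incseq_le[OF inc lim] by blast
  have "eventually (\<lambda>s. Om n < Om s) sequentially"
    using lim below[of n] by (rule order_tendstoD)
  then obtain s1 where s1: "Om n < Om s1" by (auto dest: eventually_happens)
  define K1 where "K1 = k_stage Om n s1"
  have "eventually (\<lambda>s. \<Omega> - 1 / 2 ^ K1 < Om s) sequentially"
    using lim by (rule order_tendstoD) simp
  then obtain s2 where s2: "\<And>s. s \<ge> s2 \<Longrightarrow> \<Omega> - 1 / 2 ^ K1 < Om s"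
    by (auto simp: eventually_sequentially)
  define s where "s = max s1 s2"
  have "Om s1 \<le> Om s" using inc unfolding s_def by (simp add: incseq_def)
  with s1 have "Om n < Om s" by simp
  define K where "K = k_stage Om n s"
  have "K \<le> K1" unfolding K_def K1_def using s1 \<open>Om s1 \<le> Om s\<close> by (rule k_stage_antimono)
  then have "1 / (2::real) ^ K1 \<le> 1 / 2 ^ K" by (simp add: frac_le power_increasing)
  then have "\<Omega> < Om s + 1 / 2 ^ K" using s2[of s] by (simp add: s_def)
  then obtain j :: nat where j: "j \<le> 1" "\<lfloor>\<Omega> * 2 ^ K\<rfloor> = \<lfloor>(Om s + real j / 2 ^ K) * 2 ^ K\<rfloor>"
    by (rule floor_pow2_two_choices[OF le[of s]])
  have "restrict_seq R (real_bits \<Omega>) \<in> cylinder (restricted_prefix R (Om s + real j / 2 ^ K) K)"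
    unfolding cylinder_restricted_prefix_iff[OF R] restrict_seq_def
    using real_bits_eq_if_floor_eq[OF _ j(2)] by blast
  then show ?thesis unfolding test_set_def K_def using j(1) \<open>Om n < Om s\<close> by blast
qed

lemma test_set_Suc_subset:
  assumes inc: "incseq Om" and R: "infinite R"
  shows "test_set Om R (Suc n) \<subseteq> test_set Om R n"
proof
  fix Y assume "Y \<in> test_set Om R (Suc n)"
  then obtain s j where j: "j \<le> (1::nat)" and sn: "Om (Suc n) < Om s"
    and Y: "Y \<in> cylinder (restricted_prefix R (Om s + real j / 2 ^ k_stage Om (Suc n) s) (k_stage Om (Suc n) s))"
    unfolding test_set_def by blast
  define K' where "K' = k_stage Om (Suc n) s"
  define K where "K = k_stage Om n s"
  have "Om n \<le> Om (Suc n)" using inc by (simp add: incseq_SucD)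
  with sn have "Om n < Om s" by simp
  have "K \<le> K'" unfolding K_def K'_def using \<open>Om n \<le> Om (Suc n)\<close> sn by (rule k_stage_mono)
  obtain j' :: nat where j': "j' \<le> 1"
    "\<lfloor>(Om s + real j / 2 ^ K') * 2 ^ K\<rfloor> = \<lfloor>(Om s + real j' / 2 ^ K) * 2 ^ K\<rfloor>"
  proof (cases "K = K'")
    case True then show ?thesis using that[of j] j by simp
  next
    case False
    with \<open>K \<le> K'\<close> have "real j / 2 ^ K' < 1 / 2 ^ K" using j
      by (cases j) (auto simp: divide_strict_left_mono power_strict_increasing)
    then have "Om s + real j / 2 ^ K' < Om s + 1 / 2 ^ K" by simp
    moreover have "Om s \<le> Om s + real j / 2 ^ K'" by simp
    ultimately obtain j'' :: nat where "j'' \<le> 1"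
      "\<lfloor>(Om s + real j / 2 ^ K') * 2 ^ K\<rfloor> = \<lfloor>(Om s + real j'' / 2 ^ K) * 2 ^ K\<rfloor>"
      using floor_pow2_two_choices by blast
    then show ?thesis by (rule that)
  qed
  have "Y \<in> cylinder (restricted_prefix R (Om s + real j' / 2 ^ K) K)"
    unfolding cylinder_restricted_prefix_iff[OF R]
  proof (intro allI impI)
    fix m assume m: "enumerate R m < K"
    then have "Y m = real_bits (Om s + real j / 2 ^ K') (enumerate R m)"
      using Y \<open>K \<le> K'\<close> unfolding cylinder_restricted_prefix_iff[OF R] K'_def by auto
    also have "\<dots> = real_bits (Om s + real j' / 2 ^ K) (enumerate R m)"
      by (rule real_bits_eq_if_floor_eq[OF m j'(2)])
    finally show "Y m = real_bits (Om s + real j' / 2 ^ K) (enumerate R m)" .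
  qed
  then show "Y \<in> test_set Om R n" unfolding test_set_def K_def using j'(1) \<open>Om n < Om s\<close> by blast
qed

section \<open>The measure of the test\<close>

text \<open>\<open>restricted_span R r\<close> is the length of the shortest prefix containing the first \<open>r\<close>
  positions of \<open>R\<close> (junk value \<open>Suc (enumerate R 0)\<close> for \<open>r = 0\<close>, where nothing depends on it).\<close>

definition restricted_span :: "nat set \<Rightarrow> nat \<Rightarrow> nat" where
  "restricted_span R r = Suc (enumerate R (r - 1))"

definition dyadic_cylinder :: "nat set \<Rightarrow> nat \<Rightarrow> int \<Rightarrow> (nat \<Rightarrow> bool) set" where
  "dyadic_cylinder R r z =
     {Y. \<forall>m<r. Y m = real_bits (of_int z / 2 ^ restricted_span R r) (enumerate R m)}"

text \<open>All cylinders of \<open>test_set Om R n\<close> with exactly \<open>r\<close> restricted bits lie in three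
  consecutive dyadic cylinders just above \<open>Om n\<close>.\<close>

definition cover_set :: "(nat \<Rightarrow> real) \<Rightarrow> nat set \<Rightarrow> nat \<Rightarrow> nat \<Rightarrow> (nat \<Rightarrow> bool) set" where
  "cover_set Om R n r = (let z = \<lfloor>Om n * 2 ^ restricted_span R r\<rfloor> in
     dyadic_cylinder R r z \<union> dyadic_cylinder R r (z + 1) \<union> dyadic_cylinder R r (z + 2))"

lemma dyadic_cylinder_measure:
  "dyadic_cylinder R r z \<in> sets cantor_measure"
  "emeasure cantor_measure (dyadic_cylinder R r z) = ennreal ((1/2) ^ r)"
  unfolding dyadic_cylinder_def using emeasure_cantor_prefix by auto

lemma cover_set_measure:
  "cover_set Om R n r \<in> sets cantor_measure"
  "emeasure cantor_measure (cover_set Om R n r) \<le> ennreal (3 * (1/2) ^ r)"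
proof -
  let ?C = "dyadic_cylinder R r" and ?z = "\<lfloor>Om n * 2 ^ restricted_span R r\<rfloor>"
  show "cover_set Om R n r \<in> sets cantor_measure"
    unfolding cover_set_def Let_def using dyadic_cylinder_measure(1) by auto
  have "emeasure cantor_measure (cover_set Om R n r) \<le>
      emeasure cantor_measure (?C ?z \<union> ?C (?z + 1)) + emeasure cantor_measure (?C (?z + 2))"
    unfolding cover_set_def Let_def
    by (rule emeasure_subadditive) (use dyadic_cylinder_measure(1) in auto)
  also have "\<dots> \<le> emeasure cantor_measure (?C ?z) + emeasure cantor_measure (?C (?z + 1))
      + emeasure cantor_measure (?C (?z + 2))"
    by (intro add_mono emeasure_subadditive dyadic_cylinder_measure(1) order_refl)
  also have "\<dots> = ennreal (3 * (1/2) ^ r)"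
    by (simp add: dyadic_cylinder_measure(2) ennreal_plus[symmetric] del: ennreal_plus)
  finally show "emeasure cantor_measure (cover_set Om R n r) \<le> ennreal (3 * (1/2) ^ r)" .
qed

lemma cylinder_subset_cover_set:
  assumes R: "infinite R" and "Om n < Om s" and "j \<le> (1::nat)"
  shows "cylinder (restricted_prefix R (Om s + real j / 2 ^ k_stage Om n s) (k_stage Om n s))
     \<subseteq> cover_set Om R n (card (R \<inter> {..<k_stage Om n s}))"
proof
  define K where "K = k_stage Om n s"
  define r where "r = card (R \<inter> {..<K})"
  define x where "x = Om s + real j / 2 ^ K"
  define a where "a = restricted_span R r"
  define z0 where "z0 = \<lfloor>Om n * 2 ^ a\<rfloor>"
  fix Y assume "Y \<in> cylinder (restricted_prefix R (Om s + real j / 2 ^ k_stage Om n s) (k_stage Om n s))"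
  then have Y: "\<And>m. enumerate R m < K \<Longrightarrow> Y m = real_bits x (enumerate R m)"
    unfolding cylinder_restricted_prefix_iff[OF R] K_def x_def by blast
  have cover: "cover_set Om R n (card (R \<inter> {..<k_stage Om n s})) =
      dyadic_cylinder R r z0 \<union> dyadic_cylinder R r (z0 + 1) \<union> dyadic_cylinder R r (z0 + 2)"
    unfolding cover_set_def Let_def r_def K_def z0_def a_def ..
  show "Y \<in> cover_set Om R n (card (R \<inter> {..<k_stage Om n s}))"
  proof (cases "r = 0")
    case True then show ?thesis unfolding cover dyadic_cylinder_def by simp
  next
    case False
    then have "r - 1 < r" by simp
    then have last: "enumerate R (r - 1) < K"
      using less_card_Int_lessThan_iff[OF R, of "r - 1" K] unfolding r_def by blast
    then have "a \<le> K" unfolding a_def restricted_span_def by simp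
    have "(Om s - Om n) * 2 ^ K \<le> 1"
      using k_stage_pow2_le[OF assms(2)] last unfolding K_def by auto
    then have "Om s - Om n \<le> 1 / 2 ^ K" by (simp add: field_simps)
    moreover have "real j / 2 ^ K \<le> 1 / 2 ^ K" using assms(3) by (simp add: divide_right_mono)
    moreover have "1 / (2::real) ^ K \<le> 1 / 2 ^ a" using \<open>a \<le> K\<close> by (simp add: frac_le power_increasing)
    ultimately have "x \<le> Om n + 2 / 2 ^ a" unfolding x_def by simp
    then have upper: "x * 2 ^ a \<le> Om n * 2 ^ a + 2" by (simp add: field_simps)
    have "0 \<le> real j / 2 ^ K" by simp
    then have "Om n < x" unfolding x_def using assms(2) by linarith
    then have lower: "Om n * 2 ^ a < x * 2 ^ a" by simp
    define z where "z = \<lfloor>x * 2 ^ a\<rfloor>"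
    have "z0 \<le> z" unfolding z_def z0_def using lower by (intro floor_mono) simp
    moreover have "z \<le> z0 + 2" unfolding z_def z0_def using upper floor_mono by fastforce
    ultimately have z: "z = z0 \<or> z = z0 + 1 \<or> z = z0 + 2" by linarith
    have "Y \<in> dyadic_cylinder R r z"
      unfolding dyadic_cylinder_def a_def[symmetric]
    proof (intro CollectI allI impI)
      fix m assume "m < r"
      then have "enumerate R m < K" using less_card_Int_lessThan_iff[OF R] unfolding r_def by blast
      have "enumerate R m \<le> enumerate R (r - 1)" using \<open>m < r\<close> R by simp
      then have "enumerate R m < a" unfolding a_def restricted_span_def by simp
      moreover have "\<lfloor>x * 2 ^ a\<rfloor> = \<lfloor>(of_int z / 2 ^ a) * 2 ^ a\<rfloor>" unfolding z_def by simp
      ultimately show "Y m = real_bits (of_int z / 2 ^ a) (enumerate R m)"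
        using Y[OF \<open>enumerate R m < K\<close>] real_bits_eq_if_floor_eq by simp
    qed
    then show ?thesis unfolding cover using z by auto
  qed
qed

lemma emeasure_test_set_le:
  assumes inc: "incseq Om" and lim: "Om \<longlonglongrightarrow> \<Omega>" and R: "infinite R"
  shows "emeasure cantor_measure (test_set Om R n) \<le> ennreal (6 * cost_lim \<Omega> Om R n)"
proof -
  define r0 where "r0 = card (R \<inter> {..<k_lim \<Omega> Om n})"
  have "test_set Om R n \<subseteq> (\<Union>r. cover_set Om R n (r + r0))"
  proof
    fix Y assume "Y \<in> test_set Om R n"
    then obtain s j where j: "j \<le> (1::nat)" and sn: "Om n < Om s"
      and Y: "Y \<in> cylinder (restricted_prefix R (Om s + real j / 2 ^ k_stage Om n s) (k_stage Om n s))"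
      unfolding test_set_def by blast
    have "k_lim \<Omega> Om n \<le> k_stage Om n s"
      using sn incseq_le[OF inc lim] by (rule k_lim_le_k_stage)
    then have "r0 \<le> card (R \<inter> {..<k_stage Om n s})"
      unfolding r0_def by (intro card_mono) auto
    then obtain r where "card (R \<inter> {..<k_stage Om n s}) = r + r0"
      by (metis le_add_diff_inverse2)
    then show "Y \<in> (\<Union>r. cover_set Om R n (r + r0))"
      using cylinder_subset_cover_set[OF R sn j] Y by auto
  qed
  then have "emeasure cantor_measure (test_set Om R n) \<le> emeasure cantor_measure (\<Union>r. cover_set Om R n (r + r0))"
    by (rule emeasure_mono) (use cover_set_measure(1) in auto)
  also have "\<dots> \<le> (\<Sum>r. emeasure cantor_measure (cover_set Om R n (r + r0)))"
    by (rule emeasure_subadditive_countably) (use cover_set_measure(1) in auto)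
  also have "\<dots> \<le> (\<Sum>r. ennreal (3 * (1/2) ^ (r + r0)))"
    by (intro suminf_le cover_set_measure(2)) auto
  also have "\<dots> = (\<Sum>r. ennreal ((3 * (1/2) ^ r0) * (1/2::real) ^ r))"
    by (simp add: power_add mult_ac)
  also have "\<dots> = ennreal (\<Sum>r. (3 * (1/2) ^ r0) * (1/2::real) ^ r)"
    by (rule suminf_ennreal2) (auto intro!: summable_mult summable_geometric)
  also have "(\<Sum>r. (3 * (1/2) ^ r0) * (1/2::real) ^ r) = (3 * (1/2) ^ r0) * (\<Sum>r. (1/2::real) ^ r)"
    by (rule suminf_mult) (rule summable_geometric, simp)
  also have "\<dots> = 6 * cost_lim \<Omega> Om R n"
    by (simp add: suminf_geometric cost_lim_def r0_def)
  finally show ?thesis .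
qed

lemma test_set_bounded_test:
  assumes rat: "computable_rat_seq Om" and inc: "incseq Om" and lim: "Om \<longlonglongrightarrow> \<Omega>"
    and R: "infinite R" and cR: "computable_set R"
  shows "bounded_test (cost_lim \<Omega> Om R) (test_set Om R)"
proof -
  obtain a d where "computable_fun a" "computable_fun d"
    and Om: "\<And>s. Om s = real_of_int (int_decode (a s)) / real (Suc (d s))"
    using rat unfolding computable_rat_seq_def by blast
  define W where
    "W = {x. \<exists>n c s j K. j \<le> 1 \<and> test_code_arith a d (\<lambda>i. if i \<in> R then 1 else 0) K j s c n x}"
  have "ce_set W" unfolding W_def
    by (rule ce_set_test_codes[OF \<open>computable_fun a\<close> \<open>computable_fun d\<close>])
      (use cR in \<open>simp add: computable_set_def\<close>)
  have W: "prod_encode (n, code_str \<sigma>) \<in> W \<longleftrightarrow> (\<exists>s j. j \<le> (1::nat) \<and> Om n < Om s \<and>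
      \<sigma> = restricted_prefix R (Om s + real j / 2 ^ k_stage Om n s) (k_stage Om n s))" for n \<sigma>
    unfolding W_def test_code_arith_iff[OF Om] by (auto simp: code_str_inject)
  have "test_set Om R n = \<Union> {cylinder \<sigma> | \<sigma>. prod_encode (n, code_str \<sigma>) \<in> W}" for n
    unfolding test_set_def W by blast
  with \<open>ce_set W\<close> have "unif_ce_open (test_set Om R)" unfolding unif_ce_open_def by blast
  moreover have "decseq (test_set Om R)"
    by (rule decseq_SucI) (rule test_set_Suc_subset[OF inc R])
  ultimately show ?thesis
    unfolding bounded_test_def using emeasure_test_set_le[OF inc lim R] by blast
qed

lemma bounded_below_if_eventually_const:
  fixes c :: "nat \<Rightarrow> real"
  assumes "\<And>n. 0 < c n" and "\<And>n. N \<le> n \<Longrightarrow> c n = c N"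
  shows "\<exists>C. \<forall>n. 1 \<le> C * c n"
proof -
  define C where "C = (\<Sum>m\<le>N. 1 / c m)"
  have "1 / c n \<le> C" for n
  proof -
    have "1 / c (min n N) \<le> C"
      unfolding C_def using assms(1) by (intro member_le_sum) (auto intro: less_imp_le)
    then show ?thesis using assms(2)[of n] by (cases "n \<le> N") (auto simp: min_def)
  qed
  then have "\<forall>n. 1 \<le> C * c n" using assms(1) by (simp add: field_simps)
  then show ?thesis ..
qed

lemma ce_set_UNIV: "ce_set UNIV"
  unfolding ce_set_def by (auto intro: ev_zero)

lemma bounded_test_UNIV:
  assumes inc: "incseq Om" and lim: "Om \<longlonglongrightarrow> \<Omega>" and "Om N = \<Omega>"
  shows "bounded_test (cost_lim \<Omega> Om R) (\<lambda>_. UNIV)"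
proof -
  have "Om n = \<Omega>" if "N \<le> n" for n
    using incseq_le[OF inc lim, of n] inc that \<open>Om N = \<Omega>\<close> by (metis antisym incseq_def)
  then have "cost_lim \<Omega> Om R n = cost_lim \<Omega> Om R N" if "N \<le> n" for n
    using that \<open>Om N = \<Omega>\<close> by (simp add: cost_lim_def k_lim_def)
  moreover have "0 < cost_lim \<Omega> Om R n" for n by (simp add: cost_lim_def)
  ultimately obtain C where C: "\<And>n. 1 \<le> C * cost_lim \<Omega> Om R n"
    using bounded_below_if_eventually_const by blast
  have "emeasure cantor_measure UNIV = 1"
    using emeasure_cantor_prefix[of 0] by simp
  then have "emeasure cantor_measure UNIV \<le> ennreal (C * cost_lim \<Omega> Om R n)" for n
    using C[of n] by (simp add: ennreal_leI[of 1, simplified])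
  moreover have "cylinder [] = UNIV" by (simp add: cylinder_def)
  then have "unif_ce_open (\<lambda>_. UNIV)"
    unfolding unif_ce_open_def using ce_set_UNIV by blast
  ultimately show ?thesis unfolding bounded_test_def decseq_def by blast
qed

theorem proposition5p4:
  fixes \<Omega> :: real and Om :: "nat \<Rightarrow> real" and R :: "nat set"
  assumes "0 < \<Omega>" and "\<Omega> < 1"
    and "computable_rat_seq Om" and "incseq Om" and "Om \<longlonglongrightarrow> \<Omega>"
    and "ml_random (real_bits \<Omega>)"
    and "infinite R" and "computable_set R"
  shows "\<exists>V. bounded_test (cost_lim \<Omega> Om R) V \<and> captured_by (restrict_seq R (real_bits \<Omega>)) V"
proof (cases "\<forall>n. Om n < \<Omega>")
  case True
  then have "captured_by (restrict_seq R (real_bits \<Omega>)) (test_set Om R)"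
    unfolding captured_by_def using restrict_seq_in_test_set[OF assms(4,5) _ assms(7)] by blast
  with test_set_bounded_test[OF assms(3,4,5,7,8)] show ?thesis by blast
next
  case False
  then obtain N where "\<not> Om N < \<Omega>" by blast
  moreover have "Om N \<le> \<Omega>" using incseq_le[OF assms(4,5)] by blast
  ultimately have "Om N = \<Omega>" by simp
  then have "bounded_test (cost_lim \<Omega> Om R) (\<lambda>_. UNIV)" by (rule bounded_test_UNIV[OF assms(4,5)])
  then show ?thesis unfolding captured_by_def by blast
qed

end
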